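(* Let $H$ be a group and $\Delta$ an angled $H$-graph with finitely many $H$-orbits of cells. Let $\Delta_1,\dots,\Delta_\ell$ be representatives of the $H$-orbits of connected components of $\Delta$, and let $H_i$ be the stabilizer of $\Delta_i$. If $\kappa(H_i,\Delta_i)\le\pi\cdot|H_i|^{-1}$ for $1\le i\le\ell$, then $\kappa(H,\Delta)\le\kappa(H_i,\Delta_i)$ for $1\le i\le\ell$.
   Context: An angled $K$-graph is a graph $\Gamma$ with a $K$-action (without inversions) and a $K$-invariant map $\measuredangle$ from edges to $\mathbb R$. For a group $K$, $|K|^{-1}=1/|K|$ if $K$ is finite and $0$ otherwise. For a cocompact angled $K$-graph, $\kappa(K,\Gamma)=2\pi|K|^{-1}-\sum_{v}\pi|K_v|^{-1}+\sum_{e}(\pi-\measuredangle(e))|K_e|^{-1}$, with sums over representatives of the $K$-orbits of vertices and of edges and $K_v,K_e$ their stabilizers. *)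

theory Defs
  imports "HOL-Algebra.Group_Action" Complex_Main
begin

definition inv_card :: "'a set \<Rightarrow> real" where
  "inv_card S = (if finite S then 1 / real (card S) else 0)"

text \<open>A K-action without inversions is encoded by
  actions on vertices and on edges that commute with src and tgt (an invariant
  orientation).\<close>
definition angled_graph ::
  "('g, 'm) monoid_scheme \<Rightarrow> 'v set \<Rightarrow> 'e set \<Rightarrow> ('e \<Rightarrow> 'v) \<Rightarrow> ('e \<Rightarrow> 'v)
   \<Rightarrow> ('g \<Rightarrow> 'v \<Rightarrow> 'v) \<Rightarrow> ('g \<Rightarrow> 'e \<Rightarrow> 'e) \<Rightarrow> ('e \<Rightarrow> real) \<Rightarrow> bool" where
  "angled_graph K V E src tgt actV actE ang \<longleftrightarrow>
     group K \<and> group_action K V actV \<and> group_action K E actE \<and>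
     src \<in> E \<rightarrow> V \<and> tgt \<in> E \<rightarrow> V \<and>
     (\<forall>g\<in>carrier K. \<forall>e\<in>E.
        src (actE g e) = actV g (src e) \<and> tgt (actE g e) = actV g (tgt e) \<and>
        ang (actE g e) = ang e)"

definition cocompact ::
  "('g, 'm) monoid_scheme \<Rightarrow> 'v set \<Rightarrow> 'e set
   \<Rightarrow> ('g \<Rightarrow> 'v \<Rightarrow> 'v) \<Rightarrow> ('g \<Rightarrow> 'e \<Rightarrow> 'e) \<Rightarrow> bool" where
  "cocompact K V E actV actE \<longleftrightarrow> finite (orbits K V actV) \<and> finite (orbits K E actE)"

definition kappa ::
  "('g, 'm) monoid_scheme \<Rightarrow> 'v set \<Rightarrow> 'e set
   \<Rightarrow> ('g \<Rightarrow> 'v \<Rightarrow> 'v) \<Rightarrow> ('g \<Rightarrow> 'e \<Rightarrow> 'e) \<Rightarrow> ('e \<Rightarrow> real) \<Rightarrow> real" where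
  "kappa K V E actV actE ang =
     2 * pi * inv_card (carrier K)
     - (\<Sum>Orb\<in>orbits K V actV. pi * inv_card (stabilizer K actV (SOME v. v \<in> Orb)))
     + (\<Sum>Orb\<in>orbits K E actE. (pi - ang (SOME e. e \<in> Orb))
                                * inv_card (stabilizer K actE (SOME e. e \<in> Orb)))"

definition conn_rel :: "'v set \<Rightarrow> 'e set \<Rightarrow> ('e \<Rightarrow> 'v) \<Rightarrow> ('e \<Rightarrow> 'v) \<Rightarrow> ('v \<times> 'v) set" where
  "conn_rel V E src tgt =
     (Id_on V \<union> {(src e, tgt e) | e. e \<in> E} \<union> {(tgt e, src e) | e. e \<in> E})\<^sup>*"

definition components :: "'v set \<Rightarrow> 'e set \<Rightarrow> ('e \<Rightarrow> 'v) \<Rightarrow> ('e \<Rightarrow> 'v) \<Rightarrow> 'v set set" where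
  "components V E src tgt = {conn_rel V E src tgt `` {v} | v. v \<in> V}"

definition comp_edges :: "'e set \<Rightarrow> ('e \<Rightarrow> 'v) \<Rightarrow> 'v set \<Rightarrow> 'e set" where
  "comp_edges E src C = {e \<in> E. src e \<in> C}"

definition set_act :: "('g \<Rightarrow> 'v \<Rightarrow> 'v) \<Rightarrow> 'g \<Rightarrow> 'v set \<Rightarrow> 'v set" where
  "set_act actV g C = actV g ` C"

definition comp_kappa ::
  "('g, 'm) monoid_scheme \<Rightarrow> 'e set \<Rightarrow> ('e \<Rightarrow> 'v)
   \<Rightarrow> ('g \<Rightarrow> 'v \<Rightarrow> 'v) \<Rightarrow> ('g \<Rightarrow> 'e \<Rightarrow> 'e) \<Rightarrow> ('e \<Rightarrow> real) \<Rightarrow> 'v set \<Rightarrow> real" where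
  "comp_kappa K E src actV actE ang C =
     kappa (K\<lparr>carrier := stabilizer K (set_act actV) C\<rparr>) C (comp_edges E src C)
       (\<lambda>g. restrict (actV g) C) (\<lambda>g. restrict (actE g) (comp_edges E src C)) ang"

end

theory Submission
  imports Defs
begin

text \<open>Every cell of Delta lies in exactly one component, and the components form H-orbits
  represented by the Delta_i.  Hence the H-orbits of cells of Delta correspond to the disjoint
  union over i of the H_i-orbits of cells of Delta_i, with the same stabilizers, since an element
  fixing a cell of Delta_i stabilizes Delta_i.  Splitting the orbit sums defining kappa accordingly
  gives kappa(H, Delta) = 2 pi |H|^-1 + sum_i (kappa(H_i, Delta_i) - 2 pi |H_i|^-1).  By hypothesis
  each summand is at most -pi |H_i|^-1 <= 0; dropping all but the j-th and using |H|^-1 <= |H_j|^-1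
  gives kappa(H, Delta) <= kappa(H_j, Delta_j).\<close>

definition orbit_sum ::
  "('g, 'm) monoid_scheme \<Rightarrow> 'x set \<Rightarrow> ('g \<Rightarrow> 'x \<Rightarrow> 'x) \<Rightarrow> ('x \<Rightarrow> real) \<Rightarrow> real" where
  "orbit_sum G X \<phi> W =
     (\<Sum>Ob\<in>orbits G X \<phi>. W (SOME x. x \<in> Ob) * inv_card (stabilizer G \<phi> (SOME x. x \<in> Ob)))"

lemma kappa_eq_orbit_sum:
  "kappa K V E actV actE ang =
     2 * pi * inv_card (carrier K) - orbit_sum K V actV (\<lambda>_. pi) + orbit_sum K E actE (\<lambda>e. pi - ang e)"
  unfolding kappa_def orbit_sum_def ..

lemma inv_card_nonneg: "inv_card S \<ge> 0"
  unfolding inv_card_def by simp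

lemma inv_card_antimono:
  assumes "S \<subseteq> T" "S \<noteq> {}"
  shows "inv_card T \<le> inv_card S"
proof (cases "finite T")
  case True
  then have "finite S" "card S \<le> card T" "card S > 0"
    using assms finite_subset card_mono card_gt_0_iff by blast+
  then show ?thesis
    using True unfolding inv_card_def by (simp add: frac_le)
qed (simp add: inv_card_def)

lemma sum_le_member_nonpos:
  fixes f :: "'a \<Rightarrow> 'b::ordered_comm_monoid_add"
  assumes "finite A" "i \<in> A" "\<And>x. x \<in> A \<Longrightarrow> f x \<le> 0"
  shows "sum f A \<le> f i"
proof -
  have "sum f (A - {i}) \<le> 0"
    using assms(3) by (intro sum_nonpos) blast
  then show ?thesis
    using sum.remove[OF assms(1,2), of f] add_left_mono[of "sum f (A - {i})" 0 "f i"] by simp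
qed

lemma (in group_action) orbits_eq_orbit:
  assumes "Ob \<in> orbits G E \<phi>" "y \<in> Ob"
  shows "Ob = orbit G \<phi> y"
proof -
  obtain x where x: "x \<in> E" "Ob = orbit G \<phi> x"
    using assms(1) by (auto simp: orbits_def)
  have "y \<in> E"
    using assms x element_image by (auto simp: orbit_def)
  then have "y \<in> orbit G \<phi> y"
    by (rule orbit_refl)
  moreover have "orbit G \<phi> y \<in> orbits G E \<phi>"
    using \<open>y \<in> E\<close> by (auto simp: orbits_def)
  ultimately show ?thesis
    using disjoint_union[OF assms(1)] assms(2) by blast
qed

lemma (in group_action) orbit_invariant_some:
  assumes inv: "\<And>g x. g \<in> carrier G \<Longrightarrow> x \<in> E \<Longrightarrow> f (\<phi> g x) = f x"
    and "Ob \<in> orbits G E \<phi>" "y \<in> Ob"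
  shows "f (SOME x. x \<in> Ob) = f y"
proof -
  have "(SOME x. x \<in> Ob) \<in> orbit G \<phi> y"
    using assms orbits_eq_orbit someI by metis
  then obtain g where "g \<in> carrier G" "(SOME x. x \<in> Ob) = \<phi> g y"
    by (auto simp: orbit_def)
  moreover have "y \<in> E"
    using assms orbits_coverture by blast
  ultimately show ?thesis
    using inv by simp
qed

lemma (in group_action) conjugate_mem_stabilizer:
  assumes x: "x \<in> E" and h: "h \<in> carrier G" and g: "g \<in> stabilizer G \<phi> x"
  shows "h \<otimes> g \<otimes> inv h \<in> stabilizer G \<phi> (\<phi> h x)"
proof -
  interpret group G
    using group_hom group_hom.axioms(1) by auto
  have g': "g \<in> carrier G" "\<phi> g x = x"
    using g by (auto simp: stabilizer_def)
  have hx: "\<phi> h x \<in> E"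
    using x h element_image by blast
  have "\<phi> (h \<otimes> g \<otimes> inv h) (\<phi> h x) = \<phi> (h \<otimes> g) (\<phi> (inv h) (\<phi> h x))"
    using composition_rule[OF hx] h g' by simp
  also have "\<dots> = \<phi> h x"
    using composition_rule[OF x h g'(1)] orbit_sym_aux[OF h x refl] g' by simp
  finally show ?thesis
    using h g' by (simp add: stabilizer_def)
qed

lemma (in group_action) inv_card_stabilizer_image:
  assumes x: "x \<in> E" and h: "h \<in> carrier G"
  shows "inv_card (stabilizer G \<phi> (\<phi> h x)) = inv_card (stabilizer G \<phi> x)"
proof -
  interpret group G
    using group_hom group_hom.axioms(1) by auto
  have undo: "\<phi> (inv h) (\<phi> h x) = x"
    using orbit_sym_aux[OF h x refl] .
  have hx: "\<phi> h x \<in> E"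
    using x h element_image by blast
  have "bij_betw (\<lambda>g. h \<otimes> g \<otimes> inv h) (stabilizer G \<phi> x) (stabilizer G \<phi> (\<phi> h x))"
  proof (rule bij_betw_byWitness[where f' = "\<lambda>k. inv h \<otimes> k \<otimes> h"])
    show "(\<lambda>g. h \<otimes> g \<otimes> inv h) ` stabilizer G \<phi> x \<subseteq> stabilizer G \<phi> (\<phi> h x)"
      using conjugate_mem_stabilizer[OF x h] by blast
    show "(\<lambda>k. inv h \<otimes> k \<otimes> h) ` stabilizer G \<phi> (\<phi> h x) \<subseteq> stabilizer G \<phi> x"
      using conjugate_mem_stabilizer[OF hx inv_closed[OF h]] h undo by (simp add: image_subset_iff)
    show "\<forall>g\<in>stabilizer G \<phi> x. inv h \<otimes> (h \<otimes> g \<otimes> inv h) \<otimes> h = g"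
      using h conjugation_is_surj[of "inv h"] by (simp add: stabilizer_def)
    show "\<forall>k\<in>stabilizer G \<phi> (\<phi> h x). h \<otimes> (inv h \<otimes> k \<otimes> h) \<otimes> inv h = k"
      using h conjugation_is_surj[of h] by (simp add: stabilizer_def)
  qed
  then show ?thesis
    unfolding inv_card_def using bij_betw_finite bij_betw_same_card by metis
qed

lemma (in group_action) one_mem_stabilizer_set_act:
  assumes "C \<subseteq> E"
  shows "\<one>\<^bsub>G\<^esub> \<in> stabilizer G (set_act \<phi>) C"
proof -
  have "set_act \<phi> \<one>\<^bsub>G\<^esub> C = C"
    using assms id_eq_one[symmetric] unfolding set_act_def by auto
  then show ?thesis
    using group_hom group_hom.axioms(1) group.is_monoid monoid.one_closed
    unfolding stabilizer_def by blast
qed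

section \<open>Splitting an orbit sum along an equivariant map\<close>

locale equivariant_map = group_action G X \<phi>
  for G :: "('g, 'm) monoid_scheme" and X :: "'x set" and \<phi> :: "'g \<Rightarrow> 'x \<Rightarrow> 'x" +
  fixes P :: "'x \<Rightarrow> 'c" and \<psi> :: "'g \<Rightarrow> 'c \<Rightarrow> 'c"
  assumes equivariant: "g \<in> carrier G \<Longrightarrow> x \<in> X \<Longrightarrow> P (\<phi> g x) = \<psi> g (P x)"
begin

definition fibre :: "'c \<Rightarrow> 'x set" where
  "fibre C = {x \<in> X. P x = C}"

definition fibre_group :: "'c \<Rightarrow> ('g, 'm) monoid_scheme" where
  "fibre_group C = G\<lparr>carrier := stabilizer G \<psi> C\<rparr>"

definition fibre_action :: "'c \<Rightarrow> 'g \<Rightarrow> 'x \<Rightarrow> 'x" where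
  "fibre_action C g = restrict (\<phi> g) (fibre C)"

definition orbits_meeting :: "'c \<Rightarrow> 'x set set" where
  "orbits_meeting C = {Ob \<in> orbits G X \<phi>. Ob \<inter> fibre C \<noteq> {}}"

lemma orbit_fibre_action:
  assumes "x \<in> fibre C"
  shows "orbit (fibre_group C) (fibre_action C) x = orbit G \<phi> x \<inter> fibre C"
proof -
  have x: "x \<in> X" "P x = C"
    using assms by (auto simp: fibre_def)
  have "\<phi> g x \<in> fibre C \<longleftrightarrow> \<psi> g C = C" if "g \<in> carrier G" for g
    using equivariant[OF that x(1)] element_image[OF that x(1)] x by (auto simp: fibre_def)
  then show ?thesis
    using x(1) assms
    by (auto simp: orbit_def stabilizer_def fibre_group_def fibre_action_def)
qed

lemma stabilizer_fibre_action:
  assumes "x \<in> fibre C"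
  shows "stabilizer (fibre_group C) (fibre_action C) x = stabilizer G \<phi> x"
proof -
  have "\<psi> g C = C" if "g \<in> carrier G" "\<phi> g x = x" for g
    using assms equivariant[OF that(1), of x] that by (simp add: fibre_def)
  then show ?thesis
    using assms by (auto simp: stabilizer_def fibre_group_def fibre_action_def fibre_def)
qed

lemma orbits_fibre_action:
  "orbits (fibre_group C) (fibre C) (fibre_action C) = (\<lambda>Ob. Ob \<inter> fibre C) ` orbits_meeting C"
proof (intro equalityI subsetI)
  fix Ob' assume "Ob' \<in> orbits (fibre_group C) (fibre C) (fibre_action C)"
  then obtain x where x: "x \<in> fibre C" "Ob' = orbit G \<phi> x \<inter> fibre C"
    by (auto simp: orbits_def orbit_fibre_action)
  then have "orbit G \<phi> x \<in> orbits_meeting C"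
    using orbit_refl by (auto simp: orbits_meeting_def orbits_def fibre_def)
  then show "Ob' \<in> (\<lambda>Ob. Ob \<inter> fibre C) ` orbits_meeting C"
    using x by blast
next
  fix Ob' assume "Ob' \<in> (\<lambda>Ob. Ob \<inter> fibre C) ` orbits_meeting C"
  then obtain Ob y where Ob: "Ob \<in> orbits G X \<phi>" "y \<in> Ob" "y \<in> fibre C" "Ob' = Ob \<inter> fibre C"
    by (auto simp: orbits_meeting_def)
  then have "Ob' = orbit (fibre_group C) (fibre_action C) y"
    using orbits_eq_orbit orbit_fibre_action by blast
  then show "Ob' \<in> orbits (fibre_group C) (fibre C) (fibre_action C)"
    using Ob by (auto simp: orbits_def)
qed

lemma inj_on_orbits_meeting: "inj_on (\<lambda>Ob. Ob \<inter> fibre C) (orbits_meeting C)"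
proof
  fix O1 O2 assume "O1 \<in> orbits_meeting C" "O2 \<in> orbits_meeting C" "O1 \<inter> fibre C = O2 \<inter> fibre C"
  then show "O1 = O2"
    using disjoint_union by (auto simp: orbits_meeting_def)
qed

lemma orbit_sum_fibre:
  assumes W: "\<And>g x. g \<in> carrier G \<Longrightarrow> x \<in> X \<Longrightarrow> W (\<phi> g x) = W x"
  shows "orbit_sum (fibre_group C) (fibre C) (fibre_action C) W
    = (\<Sum>Ob\<in>orbits_meeting C. W (SOME x. x \<in> Ob) * inv_card (stabilizer G \<phi> (SOME x. x \<in> Ob)))"
proof -
  have summand: "W (SOME x. x \<in> Ob \<inter> fibre C)
        * inv_card (stabilizer (fibre_group C) (fibre_action C) (SOME x. x \<in> Ob \<inter> fibre C))
      = W (SOME x. x \<in> Ob) * inv_card (stabilizer G \<phi> (SOME x. x \<in> Ob))"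
    if Ob: "Ob \<in> orbits_meeting C" for Ob
  proof -
    have some: "(SOME x. x \<in> Ob \<inter> fibre C) \<in> Ob \<inter> fibre C"
      using Ob some_in_eq unfolding orbits_meeting_def by blast
    have "Ob \<in> orbits G X \<phi>"
      using Ob unfolding orbits_meeting_def by blast
    then have "W (SOME x. x \<in> Ob) * inv_card (stabilizer G \<phi> (SOME x. x \<in> Ob))
        = W (SOME x. x \<in> Ob \<inter> fibre C) * inv_card (stabilizer G \<phi> (SOME x. x \<in> Ob \<inter> fibre C))"
      using some W inv_card_stabilizer_image
      by (intro orbit_invariant_some[where f = "\<lambda>x. W x * inv_card (stabilizer G \<phi> x)"]) auto
    then show ?thesis
      using some stabilizer_fibre_action by simp
  qed
  have "orbit_sum (fibre_group C) (fibre C) (fibre_action C) W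
      = (\<Sum>Ob\<in>orbits_meeting C. W (SOME x. x \<in> Ob \<inter> fibre C)
          * inv_card (stabilizer (fibre_group C) (fibre_action C) (SOME x. x \<in> Ob \<inter> fibre C)))"
    unfolding orbit_sum_def orbits_fibre_action sum.reindex[OF inj_on_orbits_meeting] by simp
  also have "\<dots> = (\<Sum>Ob\<in>orbits_meeting C. W (SOME x. x \<in> Ob) * inv_card (stabilizer G \<phi> (SOME x. x \<in> Ob)))"
    using summand by (rule sum.cong[OF refl])
  finally show ?thesis .
qed

end

locale equivariant_transversal = equivariant_map +
  fixes R
  assumes transversal: "x \<in> X \<Longrightarrow> \<exists>!C. C \<in> R \<and> C \<in> orbit G \<psi> (P x)"
begin

lemma orbits_eq_UN_orbits_meeting: "orbits G X \<phi> = (\<Union>C\<in>R. orbits_meeting C)"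
proof (intro equalityI subsetI)
  fix Ob assume Ob: "Ob \<in> orbits G X \<phi>"
  then obtain x where x: "x \<in> X" "Ob = orbit G \<phi> x"
    by (auto simp: orbits_def)
  obtain C g where C: "C \<in> R" "g \<in> carrier G" "C = \<psi> g (P x)"
    using transversal[OF x(1)] by (auto simp: orbit_def)
  have "\<phi> g x \<in> Ob \<inter> fibre C"
    using x C equivariant element_image by (auto simp: orbit_def fibre_def)
  then show "Ob \<in> (\<Union>C\<in>R. orbits_meeting C)"
    using Ob C(1) by (auto simp: orbits_meeting_def)
qed (auto simp: orbits_meeting_def)

lemma orbits_meeting_disjoint:
  assumes "C1 \<in> R" "C2 \<in> R" "C1 \<noteq> C2"
  shows "orbits_meeting C1 \<inter> orbits_meeting C2 = {}"
proof (rule ccontr)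
  assume "orbits_meeting C1 \<inter> orbits_meeting C2 \<noteq> {}"
  then obtain Ob y1 y2 where Ob: "Ob \<in> orbits G X \<phi>" "y1 \<in> Ob \<inter> fibre C1" "y2 \<in> Ob \<inter> fibre C2"
    by (auto simp: orbits_meeting_def)
  then obtain x where x: "x \<in> X" "Ob = orbit G \<phi> x"
    by (auto simp: orbits_def)
  have "C \<in> orbit G \<psi> (P x)" if "y \<in> Ob \<inter> fibre C" for y C
    using that x equivariant by (auto simp: orbit_def fibre_def)
  then show False
    using Ob transversal[OF x(1)] assms by blast
qed

lemma finite_transversal:
  assumes "finite (orbits G X \<phi>)" "R \<subseteq> P ` X"
  shows "finite R"
proof -
  have "orbits_meeting C \<noteq> {}" if C: "C \<in> R" for C
  proof -
    obtain x where x: "x \<in> X" "C = P x"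
      using C assms(2) by blast
    then have "orbit G \<phi> x \<in> orbits_meeting C"
      using orbit_refl by (auto simp: orbits_meeting_def orbits_def fibre_def)
    then show ?thesis
      by blast
  qed
  then have "inj_on orbits_meeting R"
    using orbits_meeting_disjoint by (metis inf.idem inj_onI)
  moreover have "orbits_meeting ` R \<subseteq> Pow (orbits G X \<phi>)"
    by (auto simp: orbits_meeting_def)
  ultimately show ?thesis
    using assms(1) inj_on_finite by blast
qed

lemma orbit_sum_decompose:
  assumes "finite (orbits G X \<phi>)" "finite R"
    and W: "\<And>g x. g \<in> carrier G \<Longrightarrow> x \<in> X \<Longrightarrow> W (\<phi> g x) = W x"
  shows "orbit_sum G X \<phi> W = (\<Sum>C\<in>R. orbit_sum (fibre_group C) (fibre C) (fibre_action C) W)"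
proof -
  have "finite (orbits_meeting C)" for C
    using assms(1) by (auto simp: orbits_meeting_def)
  then have "orbit_sum G X \<phi> W = (\<Sum>C\<in>R. \<Sum>Ob\<in>orbits_meeting C.
      W (SOME x. x \<in> Ob) * inv_card (stabilizer G \<phi> (SOME x. x \<in> Ob)))"
    unfolding orbit_sum_def orbits_eq_UN_orbits_meeting
    using orbits_meeting_disjoint assms(2) by (subst sum.UNION_disjoint) auto
  then show ?thesis
    by (simp add: orbit_sum_fibre[OF W])
qed

end

section \<open>Connected components\<close>

lemma conn_rel_equiv: "equiv UNIV (conn_rel V E src tgt)"
proof -
  let ?B = "Id_on V \<union> {(src e, tgt e) | e. e \<in> E} \<union> {(tgt e, src e) | e. e \<in> E}"
  have "sym ?B"
    unfolding sym_def by auto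
  then show ?thesis
    unfolding conn_rel_def equiv_def by (simp add: sym_rtrancl refl_rtrancl trans_rtrancl)
qed

lemma conn_rel_closed:
  assumes "src \<in> E \<rightarrow> V" "tgt \<in> E \<rightarrow> V" "(a, b) \<in> conn_rel V E src tgt" "a \<in> V"
  shows "b \<in> V"
  using assms(3,4) unfolding conn_rel_def
proof (induction rule: rtrancl_induct)
  case (step y z)
  then show ?case
    using assms(1,2) by auto
qed

lemma components_subset:
  assumes "src \<in> E \<rightarrow> V" "tgt \<in> E \<rightarrow> V" "C \<in> components V E src tgt"
  shows "C \<subseteq> V"
proof -
  obtain v where "v \<in> V" "C = conn_rel V E src tgt `` {v}"
    using assms(3) unfolding components_def by blast
  then show ?thesis
    using conn_rel_closed[OF assms(1,2)] by blast
qed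

lemma conn_rel_Image_eq_component:
  assumes "C \<in> components V E src tgt"
  shows "conn_rel V E src tgt `` {v} = C \<longleftrightarrow> v \<in> C"
proof -
  obtain w where w: "C = conn_rel V E src tgt `` {w}"
    using assms unfolding components_def by blast
  have "(v, w) \<in> conn_rel V E src tgt \<longleftrightarrow> (w, v) \<in> conn_rel V E src tgt"
    using conn_rel_equiv[of V E src tgt] unfolding equiv_def sym_def by blast
  then show ?thesis
    unfolding w eq_equiv_class_iff[OF conn_rel_equiv UNIV_I UNIV_I] by simp
qed

lemma conn_rel_action:
  assumes graph: "angled_graph H V E src tgt actV actE ang" and g: "g \<in> carrier H"
    and ab: "(a, b) \<in> conn_rel V E src tgt"
  shows "(actV g a, actV g b) \<in> conn_rel V E src tgt"
proof -
  let ?B = "Id_on V \<union> {(src e, tgt e) | e. e \<in> E} \<union> {(tgt e, src e) | e. e \<in> E}"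
  interpret group_action H E actE
    using graph unfolding angled_graph_def by blast
  have edge: "actE g e \<in> E" "src (actE g e) = actV g (src e)" "tgt (actE g e) = actV g (tgt e)"
    if "e \<in> E" for e
    using graph g that element_image unfolding angled_graph_def by blast+
  have image_step: "(actV g y, actV g z) \<in> ?B\<^sup>*" if yz: "(y, z) \<in> ?B" for y z
  proof -
    consider "y = z" | e where "e \<in> E" "y = src e" "z = tgt e" | e where "e \<in> E" "y = tgt e" "z = src e"
      using yz unfolding Id_on_def by blast
    then show ?thesis
    proof cases
      case 2
      then have "(src (actE g e), tgt (actE g e)) \<in> ?B"
        using edge by blast
      then show ?thesis
        using 2 edge by auto
    next
      case 3
      then have "(tgt (actE g e), src (actE g e)) \<in> ?B"
        using edge by blast
      then show ?thesis
        using 3 edge by auto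
    qed simp
  qed
  show ?thesis
    using ab unfolding conn_rel_def
  proof (induction rule: rtrancl_induct)
    case (step y z)
    then show ?case
      using rtrancl_trans[OF step(3) image_step[OF step(2)]] by simp
  qed simp
qed

lemma component_image:
  assumes graph: "angled_graph H V E src tgt actV actE ang" and g: "g \<in> carrier H"
    and v: "v \<in> V"
  shows "conn_rel V E src tgt `` {actV g v} = actV g ` (conn_rel V E src tgt `` {v})"
proof
  show "actV g ` (conn_rel V E src tgt `` {v}) \<subseteq> conn_rel V E src tgt `` {actV g v}"
    using conn_rel_action[OF graph g] by blast
next
  interpret group_action H V actV
    using graph unfolding angled_graph_def by blast
  interpret group H
    using graph unfolding angled_graph_def by blast
  show "conn_rel V E src tgt `` {actV g v} \<subseteq> actV g ` (conn_rel V E src tgt `` {v})"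
  proof
    fix y assume "y \<in> conn_rel V E src tgt `` {actV g v}"
    then have y: "(actV g v, y) \<in> conn_rel V E src tgt"
      by simp
    have "y \<in> V"
      using conn_rel_closed[OF _ _ y] graph g v element_image unfolding angled_graph_def by blast
    then have "actV g (actV (inv\<^bsub>H\<^esub> g) y) = y"
      using orbit_sym_aux[OF inv_closed[OF g] _ refl] g by simp
    moreover have "(v, actV (inv\<^bsub>H\<^esub> g) y) \<in> conn_rel V E src tgt"
      using conn_rel_action[OF graph inv_closed[OF g] y] orbit_sym_aux[OF g v refl] by simp
    ultimately show "y \<in> actV g ` (conn_rel V E src tgt `` {v})"
      by force
  qed
qed

lemma component_vertex_transversal:
  assumes graph: "angled_graph H V E src tgt actV actE ang"
    and R_rep: "\<forall>Orb\<in>orbits H (components V E src tgt) (set_act actV). \<exists>!C. C \<in> R \<and> C \<in> Orb"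
  shows "equivariant_transversal H V actV (\<lambda>v. conn_rel V E src tgt `` {v}) (set_act actV) R"
proof -
  have "group_action H V actV"
    using graph unfolding angled_graph_def by blast
  moreover have "conn_rel V E src tgt `` {actV g v} = set_act actV g (conn_rel V E src tgt `` {v})"
    if "g \<in> carrier H" "v \<in> V" for g v
    using component_image[OF graph that] unfolding set_act_def .
  moreover have "orbit H (set_act actV) (conn_rel V E src tgt `` {v})
      \<in> orbits H (components V E src tgt) (set_act actV)" if "v \<in> V" for v
    using that unfolding orbits_def components_def by blast
  ultimately show ?thesis
    using R_rep unfolding equivariant_transversal_def equivariant_transversal_axioms_def
      equivariant_map_def equivariant_map_axioms_def by blast
qed

lemma component_edge_transversal:
  assumes graph: "angled_graph H V E src tgt actV actE ang"
    and R_rep: "\<forall>Orb\<in>orbits H (components V E src tgt) (set_act actV). \<exists>!C. C \<in> R \<and> C \<in> Orb"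
  shows "equivariant_transversal H E actE (\<lambda>e. conn_rel V E src tgt `` {src e}) (set_act actV) R"
proof -
  interpret vertices: equivariant_transversal H V actV "\<lambda>v. conn_rel V E src tgt `` {v}" "set_act actV" R
    using component_vertex_transversal[OF graph R_rep] .
  have act: "group_action H E actE" and src_V: "\<And>e. e \<in> E \<Longrightarrow> src e \<in> V"
    and src_act: "\<And>g e. g \<in> carrier H \<Longrightarrow> e \<in> E \<Longrightarrow> src (actE g e) = actV g (src e)"
    using graph unfolding angled_graph_def by blast+
  show ?thesis
  proof (intro equivariant_transversal.intro equivariant_map.intro act
      equivariant_map_axioms.intro equivariant_transversal_axioms.intro)
    show "conn_rel V E src tgt `` {src (actE g e)} = set_act actV g (conn_rel V E src tgt `` {src e})"
      if "g \<in> carrier H" "e \<in> E" for g e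
      using that src_V src_act vertices.equivariant by simp
    show "\<exists>!C. C \<in> R \<and> C \<in> orbit H (set_act actV) (conn_rel V E src tgt `` {src e})"
      if "e \<in> E" for e
      using that src_V vertices.transversal by blast
  qed
qed

lemma finite_component_transversal:
  assumes graph: "angled_graph H V E src tgt actV actE ang"
    and cocpt: "cocompact H V E actV actE"
    and R_sub: "R \<subseteq> components V E src tgt"
    and R_rep: "\<forall>Orb\<in>orbits H (components V E src tgt) (set_act actV). \<exists>!C. C \<in> R \<and> C \<in> Orb"
  shows "finite R"
proof -
  interpret vertices: equivariant_transversal H V actV "\<lambda>v. conn_rel V E src tgt `` {v}" "set_act actV" R
    using component_vertex_transversal[OF graph R_rep] .
  show ?thesis
    using cocpt R_sub unfolding cocompact_def components_def
    by (intro vertices.finite_transversal) auto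
qed

lemma kappa_eq_sum_comp_kappa:
  assumes graph: "angled_graph H V E src tgt actV actE ang"
    and cocpt: "cocompact H V E actV actE"
    and R_sub: "R \<subseteq> components V E src tgt"
    and R_rep: "\<forall>Orb\<in>orbits H (components V E src tgt) (set_act actV). \<exists>!C. C \<in> R \<and> C \<in> Orb"
  shows "kappa H V E actV actE ang = 2 * pi * inv_card (carrier H)
    + (\<Sum>C\<in>R. comp_kappa H E src actV actE ang C - 2 * pi * inv_card (stabilizer H (set_act actV) C))"
proof -
  interpret vertices: equivariant_transversal H V actV "\<lambda>v. conn_rel V E src tgt `` {v}" "set_act actV" R
    using component_vertex_transversal[OF graph R_rep] .
  interpret edges: equivariant_transversal H E actE "\<lambda>e. conn_rel V E src tgt `` {src e}" "set_act actV" R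
    using component_edge_transversal[OF graph R_rep] .
  have src_V: "src \<in> E \<rightarrow> V" "tgt \<in> E \<rightarrow> V"
    and ang_inv: "\<And>g e. g \<in> carrier H \<Longrightarrow> e \<in> E \<Longrightarrow> ang (actE g e) = ang e"
    using graph unfolding angled_graph_def by blast+
  have finite_orbits: "finite (orbits H V actV)" "finite (orbits H E actE)"
    using cocpt unfolding cocompact_def by blast+
  have finR: "finite R"
    using finite_component_transversal[OF graph cocpt R_sub R_rep] .
  have comp_kappa: "comp_kappa H E src actV actE ang C
      = 2 * pi * inv_card (stabilizer H (set_act actV) C)
        - orbit_sum (vertices.fibre_group C) (vertices.fibre C) (vertices.fibre_action C) (\<lambda>_. pi)
        + orbit_sum (edges.fibre_group C) (edges.fibre C) (edges.fibre_action C) (\<lambda>e. pi - ang e)"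
    if C: "C \<in> R" for C
  proof -
    have component: "C \<in> components V E src tgt"
      using C R_sub by blast
    have "vertices.fibre C = C" "edges.fibre C = comp_edges E src C"
      unfolding vertices.fibre_def edges.fibre_def comp_edges_def
        conn_rel_Image_eq_component[OF component]
      using components_subset[OF src_V component] by blast+
    then show ?thesis
      unfolding comp_kappa_def kappa_eq_orbit_sum vertices.fibre_group_def edges.fibre_group_def
        vertices.fibre_action_def edges.fibre_action_def by simp
  qed
  have "kappa H V E actV actE ang = 2 * pi * inv_card (carrier H)
      - (\<Sum>C\<in>R. orbit_sum (vertices.fibre_group C) (vertices.fibre C) (vertices.fibre_action C) (\<lambda>_. pi))
      + (\<Sum>C\<in>R. orbit_sum (edges.fibre_group C) (edges.fibre C) (edges.fibre_action C) (\<lambda>e. pi - ang e))"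
    unfolding kappa_eq_orbit_sum
    using vertices.orbit_sum_decompose[OF finite_orbits(1) finR]
      edges.orbit_sum_decompose[OF finite_orbits(2) finR] ang_inv
    by simp
  then show ?thesis
    by (simp add: comp_kappa sum.distrib sum_subtractf)
qed

lemma inv_card_carrier_le_stabilizer_component:
  assumes graph: "angled_graph H V E src tgt actV actE ang"
    and C: "C \<in> components V E src tgt"
  shows "inv_card (carrier H) \<le> inv_card (stabilizer H (set_act actV) C)"
proof -
  have act: "group_action H V actV" and src_tgt: "src \<in> E \<rightarrow> V" "tgt \<in> E \<rightarrow> V"
    using graph unfolding angled_graph_def by blast+
  have "\<one>\<^bsub>H\<^esub> \<in> stabilizer H (set_act actV) C"
    by (rule group_action.one_mem_stabilizer_set_act[OF act components_subset[OF src_tgt C]])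
  then show ?thesis
    by (intro inv_card_antimono) (auto simp: stabilizer_def)
qed

theorem lemma7p1:
  fixes H :: "('g, 'm) monoid_scheme"
    and V :: "'v set" and E :: "'e set"
    and src tgt :: "'e \<Rightarrow> 'v"
    and actV :: "'g \<Rightarrow> 'v \<Rightarrow> 'v" and actE :: "'g \<Rightarrow> 'e \<Rightarrow> 'e"
    and ang :: "'e \<Rightarrow> real"
    and R :: "'v set set"
  assumes graph: "angled_graph H V E src tgt actV actE ang"
    and cocpt: "cocompact H V E actV actE"
    and R_sub: "R \<subseteq> components V E src tgt"
    and R_rep: "\<forall>Orb\<in>orbits H (components V E src tgt) (set_act actV). \<exists>!C. C \<in> R \<and> C \<in> Orb"
    and hyp: "\<forall>C\<in>R. comp_kappa H E src actV actE ang C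
                 \<le> pi * inv_card (stabilizer H (set_act actV) C)"
  shows "\<forall>C\<in>R. kappa H V E actV actE ang \<le> comp_kappa H E src actV actE ang C"
proof
  fix C0 assume C0: "C0 \<in> R"
  let ?s = "\<lambda>C. inv_card (stabilizer H (set_act actV) C)"
  have "comp_kappa H E src actV actE ang C - 2 * pi * ?s C \<le> 0" if "C \<in> R" for C
  proof -
    have "comp_kappa H E src actV actE ang C \<le> pi * ?s C" "0 \<le> pi * ?s C"
      using hyp that by (simp_all add: inv_card_nonneg)
    then show ?thesis
      by linarith
  qed
  then have "(\<Sum>C\<in>R. comp_kappa H E src actV actE ang C - 2 * pi * ?s C)
      \<le> comp_kappa H E src actV actE ang C0 - 2 * pi * ?s C0"
    by (rule sum_le_member_nonpos[OF finite_component_transversal[OF graph cocpt R_sub R_rep] C0])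
  moreover have "inv_card (carrier H) \<le> ?s C0"
    using inv_card_carrier_le_stabilizer_component[OF graph] C0 R_sub by blast
  then have "2 * pi * inv_card (carrier H) \<le> 2 * pi * ?s C0"
    by simp
  ultimately show "kappa H V E actV actE ang \<le> comp_kappa H E src actV actE ang C0"
    unfolding kappa_eq_sum_comp_kappa[OF graph cocpt R_sub R_rep] by linarith
qed

end
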